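(* Let $\mathbb Q$ be a probability measure on $(\Omega,\mathcal F)$ equivalent to $\mathbb P$, and let $(\mathcal B_n)_{n\in\mathbb N_0}$ be $\sigma$-subfields. Then $\mathcal B_n\to\mathcal B_0$ in the almost-sure sense under $\mathbb P$ if and only if $\mathcal B_n\to\mathcal B_0$ in the almost-sure sense under $\mathbb Q$.
   Context: Let $(\Omega,\mathcal F,\mathbb P)$ be a (not necessarily complete) probability space and $\mathcal N:=\{F\in\mathcal F:\mathbb P(F)=0\}$. A $\sigma$-subfield is a sub-$\sigma$-field $\mathcal A\subset\mathcal F$ with $\mathcal A=\sigma(\mathcal A\cup\mathcal N)$. For a probability measure $\mathbb R\sim\mathbb P$ and a $\sigma$-subfield $\mathcal A$, $\mathbb R_{\mathcal A}f:=\mathbb E^{\mathbb R}[f\mid\mathcal A]$. We say $\mathcal B_n\to\mathcal B_0$ in the almost-sure sense under $\mathbb R$ if for every $f\in L^1(\mathbb R)$, $\mathbb R$-a.s. $\mathbb R_{\mathcal B_n}f\to\mathbb R_{\mathcal B_0}f$ as $n\to\infty$. *)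

theory Defs
  imports "HOL-Probability.Probability"
begin

text \<open>A sigma-subfield of the probability space M: a sub-sigma-algebra A of the sets of M
  (represented as a measure whose sets form the sub-sigma-algebra; its measure component is
  irrelevant for conditional expectations) with A = sigma(A \<union> N), N the M-null sets.\<close>
definition sigma_subfield :: "'a measure \<Rightarrow> 'a measure \<Rightarrow> bool" where
  "sigma_subfield M A \<longleftrightarrow> subalgebra M A \<and>
     sets A = sigma_sets (space M) (sets A \<union> null_sets M)"

definition as_converges :: "'a measure \<Rightarrow> (nat \<Rightarrow> 'a measure) \<Rightarrow> bool" where
  "as_converges R B \<longleftrightarrow>
     (\<forall>f::'a \<Rightarrow> real. integrable R f \<longrightarrow>
        (AE x in R. (\<lambda>n. real_cond_exp R (B n) f x) \<longlonglongrightarrow> real_cond_exp R (B 0) f x))"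

end

theory Submission
  imports Defs
begin

text \<open>Let \<open>D\<close> be the density of \<open>Q\<close> with respect to \<open>P\<close>; equivalence of the measures makes
  \<open>D > 0\<close> \<open>P\<close>-a.e. The abstract Bayes formula
  \<open>E\<^sub>Q[f | \<B>] = E\<^sub>P[D f | \<B>] / E\<^sub>P[D | \<B>]\<close> holds a.e. for every sub-\<open>\<sigma>\<close>-algebra \<open>\<B>\<close>.
  If \<open>\<B>\<^sub>n \<rightarrow> \<B>\<^sub>0\<close> a.s. under \<open>P\<close>, numerator and denominator converge \<open>P\<close>-a.s., and the limit of
  the denominator is \<open>E\<^sub>P[D | \<B>\<^sub>0] > 0\<close>, so the quotients converge \<open>P\<close>-a.s., hence \<open>Q\<close>-a.s.
  The converse is the same argument with \<open>P\<close> and \<open>Q\<close> exchanged.\<close>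

lemma prob_space_subalgebra_sigma_finite:
  assumes "prob_space M" "subalgebra M F"
  shows "sigma_finite_subalgebra M F"
proof -
  interpret prob_space M by fact
  have "finite_measure_subalgebra M F"
    unfolding finite_measure_subalgebra_def finite_measure_subalgebra_axioms_def
    using assms(2) finite_measure_axioms by simp
  then show ?thesis by (rule finite_measure_subalgebra_is_sigma_finite)
qed

lemma subalgebra_cong_sets:
  assumes "subalgebra M F" "sets N = sets M"
  shows "subalgebra N F"
  using assms sets_eq_imp_space_eq[OF assms(2)] unfolding subalgebra_def by simp

lemma equivalent_prob_space_density:
  assumes "prob_space P" "prob_space Q" and sets_eq: "sets Q = sets P"
    and "absolutely_continuous P Q" "absolutely_continuous Q P"
  obtains D where "D \<in> borel_measurable P" "\<And>x. 0 \<le> D x"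
    "Q = density P (\<lambda>x. ennreal (D x))" "AE x in P. 0 < D x" "integrable P D"
proof -
  interpret P: prob_space P by fact
  interpret Q: prob_space Q by fact
  obtain D where D[measurable]: "D \<in> borel_measurable P"
    and D_RN: "AE x in P. RN_deriv P Q x = ennreal (D x)"
    and D_pos_Q: "AE x in Q. 0 < D x" and D_nonneg: "\<And>x. 0 \<le> D x"
    using P.real_RN_deriv[OF Q.finite_measure_axioms assms(4) sets_eq] by blast
  have Q_density: "Q = density P (\<lambda>x. ennreal (D x))"
    using P.density_RN_deriv[OF assms(4) sets_eq]
      density_cong[OF borel_measurable_RN_deriv _ D_RN] by simp
  have "AE x in P. 0 < D x"
    using absolutely_continuous_AE[OF sets_eq[symmetric] assms(5) D_pos_Q] .
  moreover have "integrable P D"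
  proof -
    have "integrable (density P (\<lambda>x. ennreal (D x))) (\<lambda>x. 1::real) \<longleftrightarrow>
        integrable P (\<lambda>x. D x *\<^sub>R (1::real))"
      by (rule integrable_density) (auto simp: D_nonneg)
    then show ?thesis using Q.integrable_const[of "1::real"] unfolding Q_density[symmetric] by simp
  qed
  ultimately show thesis using that D D_nonneg Q_density by blast
qed

lemma real_cond_exp_density:
  assumes "prob_space P" "prob_space Q"
    and D[measurable]: "D \<in> borel_measurable P" and D_nonneg: "\<And>x. 0 \<le> D x"
    and Q_density: "Q = density P (\<lambda>x. ennreal (D x))"
    and D_pos: "AE x in P. 0 < D x"
    and sub: "subalgebra P F"
    and f_int: "integrable Q f"
  shows "AE x in P. real_cond_exp Q F f x =
     real_cond_exp P F (\<lambda>x. D x * f x) x / real_cond_exp P F D x"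
proof -
  have sets_eq: "sets Q = sets P" using Q_density by simp
  interpret P: sigma_finite_subalgebra P F
    using prob_space_subalgebra_sigma_finite[OF assms(1) sub] .
  interpret Q: sigma_finite_subalgebra Q F
    using prob_space_subalgebra_sigma_finite[OF assms(2) subalgebra_cong_sets[OF sub sets_eq]] .
  have integrable_Q_iff: "integrable Q g \<longleftrightarrow> integrable P (\<lambda>x. D x * g x)"
    and integral_Q: "integral\<^sup>L Q g = integral\<^sup>L P (\<lambda>x. D x * g x)"
    if "g \<in> borel_measurable P" for g :: "'a \<Rightarrow> real"
    using integrable_density[of g P D] integral_density[of g P D] D_nonneg Q_density that
    by (simp_all add: AE_I2)
  define h where "h = real_cond_exp Q F f"
  have h_meas_F[measurable]: "h \<in> borel_measurable F" unfolding h_def by simp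
  have h_meas[measurable]: "h \<in> borel_measurable P" using measurable_from_subalg[OF sub h_meas_F] .
  have f_meas[measurable]: "f \<in> borel_measurable P"
    using f_int sets_eq measurable_cong_sets by blast
  have hD_int: "integrable P (\<lambda>x. h x * D x)"
    using integrable_Q_iff[OF h_meas] Q.real_cond_exp_int(1)[OF f_int]
    by (simp add: h_def mult.commute)
  have Df_int: "integrable P (\<lambda>x. D x * f x)" using integrable_Q_iff[OF f_meas] f_int by simp
  have "integrable Q (\<lambda>_. 1::real)"
    using prob_space.axioms(1)[OF assms(2)] by (rule finite_measure.integrable_const)
  then have D_int: "integrable P D" using integrable_Q_iff[of "\<lambda>_. 1"] by simp
  have pull_out: "AE x in P. real_cond_exp P F (\<lambda>x. h x * D x) x = h x * real_cond_exp P F D x"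
    by (rule P.real_cond_exp_mult) (use hD_int in auto)
  have "AE x in P. real_cond_exp P F (\<lambda>x. h x * D x) x = real_cond_exp P F (\<lambda>x. D x * f x) x"
  proof (rule P.real_cond_exp_charact)
    fix A assume A: "A \<in> sets F"
    then have [measurable]: "A \<in> sets P" using sub unfolding subalgebra_def by auto
    have "(\<integral>x\<in>A. h x * D x \<partial>P) = (\<integral>x. D x * (indicator A x * h x) \<partial>P)"
      unfolding set_lebesgue_integral_def by (intro Bochner_Integration.integral_cong) auto
    also have "\<dots> = (\<integral>x. indicator A x * h x \<partial>Q)" by (rule integral_Q[symmetric]) simp
    also have "\<dots> = (\<integral>x. indicator A x * f x \<partial>Q)"
      using Q.real_cond_exp_intA[OF f_int A] unfolding h_def set_lebesgue_integral_def by simp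
    also have "\<dots> = (\<integral>x. D x * (indicator A x * f x) \<partial>P)" by (rule integral_Q) simp
    also have "\<dots> = (\<integral>x\<in>A. D x * f x \<partial>P)"
      unfolding set_lebesgue_integral_def by (intro Bochner_Integration.integral_cong) auto
    also have "\<dots> = (\<integral>x\<in>A. real_cond_exp P F (\<lambda>x. D x * f x) x \<partial>P)"
      using P.real_cond_exp_intA[OF Df_int A] .
    finally show "(\<integral>x\<in>A. h x * D x \<partial>P) = (\<integral>x\<in>A. real_cond_exp P F (\<lambda>x. D x * f x) x \<partial>P)" .
  qed (use hD_int P.real_cond_exp_int(1)[OF Df_int] in auto)
  moreover have "AE x in P. real_cond_exp P F D x > 0"
    by (rule P.real_cond_exp_gr_c[OF D_int D_pos])
  ultimately show ?thesis using pull_out unfolding h_def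
    by eventually_elim (auto simp: field_simps)
qed

lemma as_converges_equivalent_measure:
  assumes "prob_space P" "prob_space Q" and sets_eq: "sets Q = sets P"
    and "absolutely_continuous P Q" "absolutely_continuous Q P"
    and sub: "\<And>n. subalgebra P (B n)"
    and conv: "as_converges P B"
  shows "as_converges Q B"
  unfolding as_converges_def
proof (intro allI impI)
  fix f :: "'a \<Rightarrow> real" assume f_int: "integrable Q f"
  obtain D where D[measurable]: "D \<in> borel_measurable P" and D_nonneg: "\<And>x. 0 \<le> D x"
    and Q_density: "Q = density P (\<lambda>x. ennreal (D x))"
    and D_pos: "AE x in P. 0 < D x" and D_int: "integrable P D"
    using equivalent_prob_space_density[OF assms(1-5)] by blast
  have f_meas[measurable]: "f \<in> borel_measurable P"
    using f_int sets_eq measurable_cong_sets by blast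
  have Df_int: "integrable P (\<lambda>x. D x * f x)"
    using integrable_density[of f P D] D_nonneg Q_density f_int by (simp add: AE_I2)
  have num: "AE x in P. (\<lambda>n. real_cond_exp P (B n) (\<lambda>x. D x * f x) x)
      \<longlonglongrightarrow> real_cond_exp P (B 0) (\<lambda>x. D x * f x) x"
    and den: "AE x in P. (\<lambda>n. real_cond_exp P (B n) D x) \<longlonglongrightarrow> real_cond_exp P (B 0) D x"
    using conv Df_int D_int unfolding as_converges_def by blast+
  have bayes: "AE x in P. \<forall>n. real_cond_exp Q (B n) f x =
      real_cond_exp P (B n) (\<lambda>x. D x * f x) x / real_cond_exp P (B n) D x"
    unfolding AE_all_countable
    using real_cond_exp_density[OF assms(1,2) D D_nonneg Q_density D_pos sub f_int] by blast
  have den_limit_pos: "AE x in P. real_cond_exp P (B 0) D x > 0"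
    using sigma_finite_subalgebra.real_cond_exp_gr_c[OF _ D_int D_pos]
      prob_space_subalgebra_sigma_finite[OF assms(1) sub] by blast
  have "AE x in P. (\<lambda>n. real_cond_exp Q (B n) f x) \<longlonglongrightarrow> real_cond_exp Q (B 0) f x"
    using num den bayes den_limit_pos by eventually_elim (simp add: tendsto_divide)
  then show "AE x in Q. (\<lambda>n. real_cond_exp Q (B n) f x) \<longlonglongrightarrow> real_cond_exp Q (B 0) f x"
    using absolutely_continuous_AE[OF sets_eq assms(4)] by blast
qed

theorem proposition4p6:
  fixes P Q :: "'a measure" and B :: "nat \<Rightarrow> 'a measure"
  assumes "prob_space P" and "prob_space Q"
    and "sets Q = sets P"
    and "absolutely_continuous P Q" and "absolutely_continuous Q P"
    and "\<And>n. sigma_subfield P (B n)"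
  shows "as_converges P B \<longleftrightarrow> as_converges Q B"
proof -
  have sub_P: "subalgebra P (B n)" for n
    using assms(6)[of n] unfolding sigma_subfield_def by blast
  have sub_Q: "subalgebra Q (B n)" for n
    using subalgebra_cong_sets[OF sub_P assms(3)] .
  show ?thesis
    using as_converges_equivalent_measure[of P Q B, OF assms(1-5) sub_P]
      as_converges_equivalent_measure[of Q P B, OF assms(2,1) assms(3)[symmetric] assms(5,4) sub_Q]
    by blast
qed

end
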